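(* Let $A$ be a commutative noetherian local ring, let $x,y\in A$ be an exact pair of zero divisors, and let $a\in A$. Then the sequence of free $A$-modules \[\boldsymbol{F}=\ \cdots\to A^2\xrightarrow{\gamma_a}A^2\xrightarrow{\eta_a}A^2\xrightarrow{\gamma_a}A^2\xrightarrow{\eta_a}\cdots\] is an exact complex. Moreover, with $\varphi=\begin{pmatrix}0&1\\-1&0\end{pmatrix}$ one has $\varphi\gamma_a^t=\eta_a\varphi$ and $\varphi\eta_a^t=\gamma_a\varphi$ (where ${}^t$ denotes transposition), so that $\varphi$ in each degree gives an isomorphism of complexes $\operatorname{Hom}_A(\boldsymbol{F},A)\xrightarrow{\cong}\boldsymbol{F}$, where $\operatorname{Hom}_A(A^2,A)$ is identified with $A^2$ so that the dual of a matrix is its transpose. In particular, $\operatorname{Hom}_A(\boldsymbol{F},A)$ is exact.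
   Context: Two non-units $x,y\in A$ form an exact pair of zero divisors if $\operatorname{Ann}_A(x)=(y)$ and $\operatorname{Ann}_A(y)=(x)$. For $a\in A$, $\gamma_a=\begin{pmatrix} x & a\\ 0 & y\end{pmatrix}$ and $\eta_a=\begin{pmatrix} y & -a\\ 0 & x\end{pmatrix}$, viewed as $A$-linear maps $A^2\to A^2$ acting on column vectors by left multiplication. *)

theory Defs
  imports "HOL-Analysis.Analysis"
begin

definition is_ideal :: "'a::comm_ring_1 set \<Rightarrow> bool" where
  "is_ideal I \<longleftrightarrow> 0 \<in> I \<and> (\<forall>u\<in>I. \<forall>v\<in>I. u + v \<in> I) \<and> (\<forall>r. \<forall>u\<in>I. r * u \<in> I)"

definition gen_ideal :: "'a::comm_ring_1 set \<Rightarrow> 'a set" where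
  "gen_ideal S = {u. \<exists>T c. finite T \<and> T \<subseteq> S \<and> u = (\<Sum>s\<in>T. c s * s)}"

definition noetherian_ring :: "'a::comm_ring_1 itself \<Rightarrow> bool" where
  "noetherian_ring _ \<longleftrightarrow> (\<forall>I::'a set. is_ideal I \<longrightarrow> (\<exists>S. finite S \<and> I = gen_ideal S))"

definition maximal_ideal :: "'a::comm_ring_1 set \<Rightarrow> bool" where
  "maximal_ideal m \<longleftrightarrow> is_ideal m \<and> m \<noteq> UNIV \<and>
     (\<forall>J. is_ideal J \<and> m \<subseteq> J \<longrightarrow> J = m \<or> J = UNIV)"

definition local_ring :: "'a::comm_ring_1 itself \<Rightarrow> bool" where
  "local_ring _ \<longleftrightarrow> (\<exists>!m::'a set. maximal_ideal m)"

definition Ann :: "'a::comm_ring_1 \<Rightarrow> 'a set" where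
  "Ann x = {z. z * x = 0}"

definition exact_pair :: "'a::comm_ring_1 \<Rightarrow> 'a \<Rightarrow> bool" where
  "exact_pair x y \<longleftrightarrow> \<not> x dvd 1 \<and> \<not> y dvd 1 \<and>
     Ann x = gen_ideal {y} \<and> Ann y = gen_ideal {x}"

text \<open>The 2x2 matrices gamma_a, eta_a, phi (rows indexed first; index 1,2 of type 2).\<close>
definition mat2 :: "'a \<Rightarrow> 'a \<Rightarrow> 'a \<Rightarrow> 'a \<Rightarrow> 'a^2^2" where
  "mat2 p q r s = (\<chi> i j. if i = 1 then (if j = 1 then p else q) else (if j = 1 then r else s))"

definition gamma :: "'a::comm_ring_1 \<Rightarrow> 'a \<Rightarrow> 'a \<Rightarrow> 'a^2^2" where
  "gamma x y a = mat2 x a 0 y"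

definition eta :: "'a::comm_ring_1 \<Rightarrow> 'a \<Rightarrow> 'a \<Rightarrow> 'a^2^2" where
  "eta x y a = mat2 y (- a) 0 x"

definition phi :: "'a::comm_ring_1^2^2" where
  "phi = mat2 0 1 (- 1) 0"

definition exact_at :: "'a::comm_ring_1^2^2 \<Rightarrow> 'a^2^2 \<Rightarrow> bool" where
  "exact_at f g \<longleftrightarrow> g ** f = 0 \<and> {v. g *v v = 0} = range (\<lambda>w. f *v w)"

end

theory Submission
  imports Defs
begin

text \<open>
  If \<open>\<eta>\<^sub>a v = 0\<close>, then \<open>x v\<^sub>2 = 0\<close> forces \<open>v\<^sub>2 = w\<^sub>2 y\<close>, and then \<open>(v\<^sub>1 - a w\<^sub>2) y = 0\<close>
  forces \<open>v\<^sub>1 - a w\<^sub>2 = w\<^sub>1 x\<close>; so \<open>v = \<gamma>\<^sub>a w\<close>. Since \<open>\<eta>\<^sub>a\<close> for \<open>(x, y, a)\<close> is \<open>\<gamma>\<close> for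
  \<open>(y, x, -a)\<close>, and \<open>(y, x)\<close> is again an exact pair, this settles both degrees. The commutation relations with
  \<open>\<phi>\<close> exhibit the transposed maps as conjugates of \<open>\<eta>\<^sub>a\<close> and \<open>\<gamma>\<^sub>a\<close> by the invertible \<open>\<phi>\<close>,
  and exactness is invariant under such a change of basis.
\<close>

lemma gen_ideal_singleton: "gen_ideal {y} = range (\<lambda>c. c * y)"
proof (intro set_eqI iffI)
  fix u assume "u \<in> gen_ideal {y}"
  then obtain T c where "T \<subseteq> {y}" "u = (\<Sum>s\<in>T. c s * s)"
    unfolding gen_ideal_def by blast
  moreover from \<open>T \<subseteq> {y}\<close> have "T = {} \<or> T = {y}" by blast
  ultimately have "u = 0 * y \<or> u = c y * y" by auto
  then show "u \<in> range (\<lambda>c. c * y)" by blast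
next
  fix u assume "u \<in> range (\<lambda>c. c * y)"
  then obtain c where "u = c * y" by blast
  then show "u \<in> gen_ideal {y}" unfolding gen_ideal_def
    by (intro CollectI exI[of _ "{y}"] exI[of _ "\<lambda>_. c"]) auto
qed

lemma exact_pair_sym: "exact_pair x y \<Longrightarrow> exact_pair y x"
  unfolding exact_pair_def by blast

lemma exact_pair_annihilates:
  assumes "exact_pair x y" and "z * x = 0"
  obtains c where "z = c * y"
  using assms unfolding exact_pair_def Ann_def gen_ideal_singleton by blast

lemma exact_pair_mult_eq_0:
  assumes "exact_pair x y"
  shows "x * y = 0"
proof -
  have "y \<in> Ann x"
    using assms unfolding exact_pair_def gen_ideal_singleton by (auto intro: range_eqI[of _ _ 1])
  then show ?thesis by (simp add: Ann_def mult.commute)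
qed

lemma mat2_eq_iff: "mat2 p q r s = mat2 p2 q2 r2 s2 \<longleftrightarrow> p = p2 \<and> q = q2 \<and> r = r2 \<and> s = s2"
  by (simp add: mat2_def vec_eq_iff forall_2)

lemma mat2_mult_mat2:
  "mat2 p q r s ** mat2 p2 q2 r2 s2 = mat2 (p * p2 + q * r2) (p * q2 + q * s2) (r * p2 + s * r2) (r * q2 + s * s2)"
  by (simp add: mat2_def matrix_matrix_mult_def sum_2 vec_eq_iff forall_2)

lemma mat2_mult_vec:
  "mat2 p q r s *v v = vector [p * v$1 + q * v$2, r * v$1 + s * v$2]"
  by (simp add: mat2_def matrix_vector_mult_def sum_2 vec_eq_iff forall_2)

lemma zero_mat2: "0 = mat2 0 0 0 0"
  by (simp add: mat2_def vec_eq_iff forall_2)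

lemma mat_1_mat2: "mat 1 = mat2 1 0 0 1"
  by (simp add: mat2_def mat_def vec_eq_iff forall_2)

lemma transpose_mat2: "transpose (mat2 p q r s) = mat2 p r q s"
  by (simp add: mat2_def transpose_def vec_eq_iff forall_2)

lemma vector_2_eq_iff: "vector [p, q] = (v :: 'a::zero^2) \<longleftrightarrow> p = v$1 \<and> q = v$2"
  by (auto simp: vec_eq_iff forall_2)

lemma exact_atI:
  assumes "g ** f = 0" and "\<And>v. g *v v = 0 \<Longrightarrow> \<exists>w. v = f *v w"
  shows "exact_at f g"
  unfolding exact_at_def
proof (intro conjI set_eqI iffI)
  fix v assume "v \<in> range (\<lambda>w. f *v w)"
  then show "v \<in> {v. g *v v = 0}"
    using assms(1) by (auto simp: matrix_vector_mul_assoc)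
qed (use assms in auto)

lemma exact_at_conjugate:
  assumes "Q ** P = mat 1" and "P ** Q = mat 1" and "exact_at f g"
  shows "exact_at (Q ** f ** P) (Q ** g ** P)"
proof (rule exact_atI)
  have "(Q ** g ** P) ** (Q ** f ** P) = Q ** (g ** (P ** Q) ** f) ** P"
    by (simp add: matrix_mul_assoc)
  then show "(Q ** g ** P) ** (Q ** f ** P) = 0"
    using assms(2,3) by (simp add: exact_at_def)
next
  fix v assume "(Q ** g ** P) *v v = 0"
  then have "P ** Q ** g ** P *v v = 0"
    by (metis matrix_vector_mul_assoc matrix_vector_mult_0_right)
  then have "g *v (P *v v) = 0"
    using assms(2) by (simp add: matrix_vector_mul_assoc)
  then obtain w where "P *v v = f *v w"
    using assms(3) by (auto simp: exact_at_def)
  then have "v = Q ** f ** P *v (Q *v w)"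
    using assms(1,2) by (metis matrix_vector_mul_assoc matrix_vector_mul_lid matrix_mul_assoc)
  then show "\<exists>w. v = (Q ** f ** P) *v w" by blast
qed

lemma eta_eq_gamma: "eta x y a = gamma y x (- a)"
  by (simp add: eta_def gamma_def)

lemma gamma_eq_eta: "gamma x y a = eta y x (- a)"
  by (simp add: eta_def gamma_def)

lemma exact_at_gamma_eta:
  assumes "exact_pair x y"
  shows "exact_at (gamma x y a) (eta x y a)"
proof (rule exact_atI)
  have "x * y = 0" "y * x = 0"
    using exact_pair_mult_eq_0[OF assms] by (simp_all add: mult.commute)
  then show "eta x y a ** gamma x y a = 0"
    by (simp add: eta_def gamma_def mat2_mult_mat2 zero_mat2 mat2_eq_iff algebra_simps)
next
  fix v assume "eta x y a *v v = 0"
  then have v1: "y * v$1 - a * v$2 = 0" and v2: "v$2 * x = 0"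
    by (auto simp: eta_def mat2_mult_vec vector_2_eq_iff mult.commute)
  obtain w2 where w2: "v$2 = w2 * y"
    using exact_pair_annihilates[OF assms v2] .
  have "(v$1 - a * w2) * y = 0"
    using v1 w2 by (simp add: algebra_simps)
  then obtain w1 where w1: "v$1 - a * w2 = w1 * x"
    using exact_pair_annihilates[OF exact_pair_sym[OF assms]] by blast
  have "gamma x y a *v vector [w1, w2] = v"
    using w1 w2 by (simp add: gamma_def mat2_mult_vec vector_2_eq_iff algebra_simps)
  then show "\<exists>w. v = gamma x y a *v w" by (intro exI) (rule sym)
qed

lemma phi_transpose_gamma: "phi ** transpose (gamma x y a) = eta x y a ** phi"
  by (simp add: phi_def eta_def gamma_def transpose_mat2 mat2_mult_mat2 mat2_eq_iff)

lemma phi_transpose_eta: "phi ** transpose (eta x y a) = gamma x y a ** phi"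
  by (simp add: phi_def eta_def gamma_def transpose_mat2 mat2_mult_mat2 mat2_eq_iff)

lemma transpose_phi_mult_phi: "transpose phi ** phi = mat 1"
  by (simp add: phi_def transpose_mat2 mat2_mult_mat2 mat_1_mat2)

lemma phi_mult_transpose_phi: "phi ** transpose phi = mat 1"
  by (simp add: phi_def transpose_mat2 mat2_mult_mat2 mat_1_mat2)

lemma transpose_eq_conjugate_by_phi:
  assumes "phi ** transpose f = g ** phi"
  shows "transpose f = transpose phi ** g ** phi"
  by (metis assms matrix_mul_assoc matrix_mul_lid transpose_phi_mult_phi)

theorem lemma3p4:
  fixes x y a :: "'a::comm_ring_1"
  assumes "noetherian_ring TYPE('a)" and "local_ring TYPE('a)"
    and "exact_pair x y"
  shows "exact_at (gamma x y a) (eta x y a) \<and> exact_at (eta x y a) (gamma x y a)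
    \<and> phi ** transpose (gamma x y a) = eta x y a ** phi
    \<and> phi ** transpose (eta x y a) = gamma x y a ** phi
    \<and> invertible (phi :: 'a^2^2)
    \<and> exact_at (transpose (eta x y a)) (transpose (gamma x y a))
    \<and> exact_at (transpose (gamma x y a)) (transpose (eta x y a))"
proof -
  have ex_ge: "exact_at (gamma x y a) (eta x y a)"
    using exact_at_gamma_eta[OF assms(3)] .
  have ex_eg: "exact_at (eta x y a) (gamma x y a)"
    using exact_at_gamma_eta[OF exact_pair_sym[OF assms(3)], of "- a"]
    by (simp add: eta_eq_gamma[of x y] gamma_eq_eta[of x y])
  have transpose_gamma: "transpose (gamma x y a) = transpose phi ** eta x y a ** phi"
    by (rule transpose_eq_conjugate_by_phi[OF phi_transpose_gamma])
  have transpose_eta: "transpose (eta x y a) = transpose phi ** gamma x y a ** phi"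
    by (rule transpose_eq_conjugate_by_phi[OF phi_transpose_eta])
  note conjugate = exact_at_conjugate[OF transpose_phi_mult_phi phi_mult_transpose_phi]
  have "exact_at (transpose (eta x y a)) (transpose (gamma x y a))"
    unfolding transpose_gamma transpose_eta by (rule conjugate[OF ex_ge])
  moreover have "exact_at (transpose (gamma x y a)) (transpose (eta x y a))"
    unfolding transpose_gamma transpose_eta by (rule conjugate[OF ex_eg])
  moreover have "invertible (phi :: 'a^2^2)"
    using transpose_phi_mult_phi phi_mult_transpose_phi invertible_def by blast
  ultimately show ?thesis
    using ex_ge ex_eg phi_transpose_gamma phi_transpose_eta by blast
qed

end
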